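(* Assume $\mathbb{E}[V(yZ_T^0)]<\infty$ for every $y>0$. Then: (1) for every $y>0$, $v(y):=\mathbb{E}[V(yZ_T^0)]=\sup_{x>0}\{u(x,U)-xy\}$; (2) the function $x\mapsto u(x,U_c)$ coincides on $(0,\infty)$ with the concave envelope of the function $x\mapsto u(x,U)$.
   Context: Fix $T>0$ and a filtered probability space $(\Omega,\mathcal F,(\mathcal F_t)_{0\le t\le T},\mathbf P)$ satisfying the usual conditions. Fix $0<\lambda<1$ and a strictly positive càdlàg adapted stock price $S$. A $\lambda$-consistent price system is a strictly positive process $Z=(Z^0,Z^1)$ with $Z^0_0=1$, $Z^0$ a $\mathbf P$-martingale, $Z^1$ a $\mathbf P$-local martingale, and $Z^1_t/Z^0_t\in[(1-\lambda)S_t,S_t]$ a.s. for all $t$. Standing assumption: one such $Z$ is fixed. Following the paper, $\mathcal C(x)=\{f\in L^0_+(\mathbf P):\mathbb{E}[Z_T^0 f]\le x\}$ for $x>0$. A utility is a function $U:(0,\infty)\to\mathbb R$ that is non-constant, increasing, upper semicontinuous, with $U(\infty):=\lim_{x\to\infty}U(x)>0$ and $\lim_{x\to\infty}U(x)/x=0$; $U$ need not be concave. $U$ is extended by $-\infty$ on $(-\infty,0)$ and $U(0):=\lim_{x\downarrow0}U(x)$. For $f\ge0$, $\mathbb{E}[U(f)]:=-\infty$ if $U^-(f)\notin L^1$. For a utility-type function $W$ (here $W=U$ or $W=U_c$), $u(x,W):=\sup\{\mathbb{E}[W(f)]:f\in\mathcal C(x)\}$. The concave envelope $U_c$ of $U$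 is the smallest concave function $\mathbb R\to\mathbb R\cup\{-\infty\}$ with $U_c\ge U$; the concave envelope of a function $g$ on $(0,\infty)$ is likewise the smallest concave function dominating $g$. The convex conjugate of $U$ is $V(y):=\sup_{x>0}\{U(x)-xy\}$, $y>0$. *)

theory Defs
  imports "HOL-Probability.Probability"
begin

(* F t is the sigma-algebra F_t, as a sub-measure-space of M (same space, subset of sets) *)
definition filtration :: "'a measure \<Rightarrow> real \<Rightarrow> (real \<Rightarrow> 'a measure) \<Rightarrow> bool" where
  "filtration M T F \<longleftrightarrow>
     (\<forall>t\<in>{0..T}. subalgebra M (F t)) \<and>
     (\<forall>s\<in>{0..T}. \<forall>t\<in>{0..T}. s \<le> t \<longrightarrow> sets (F s) \<subseteq> sets (F t))"

definition usual_conditions :: "'a measure \<Rightarrow> real \<Rightarrow> (real \<Rightarrow> 'a measure) \<Rightarrow> bool" where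
  "usual_conditions M T F \<longleftrightarrow>
     (\<forall>N\<in>null_sets M. \<forall>A. A \<subseteq> N \<longrightarrow> A \<in> sets (F 0)) \<and>
     (\<forall>t\<in>{0..<T}. sets (F t) = (\<Inter>s\<in>{t<..T}. sets (F s)))"

definition adapted :: "real \<Rightarrow> (real \<Rightarrow> 'a measure) \<Rightarrow> (real \<Rightarrow> 'a \<Rightarrow> real) \<Rightarrow> bool" where
  "adapted T F X \<longleftrightarrow> (\<forall>t\<in>{0..T}. X t \<in> borel_measurable (F t))"

definition cadlag :: "'a measure \<Rightarrow> real \<Rightarrow> (real \<Rightarrow> 'a \<Rightarrow> real) \<Rightarrow> bool" where
  "cadlag M T X \<longleftrightarrow> (\<forall>\<omega>\<in>space M.
      (\<forall>t\<in>{0..<T}. ((\<lambda>s. X s \<omega>) \<longlongrightarrow> X t \<omega>) (at_right t)) \<and>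
      (\<forall>t\<in>{0<..T}. \<exists>l. ((\<lambda>s. X s \<omega>) \<longlongrightarrow> l) (at_left t)))"

definition martingale :: "'a measure \<Rightarrow> real \<Rightarrow> (real \<Rightarrow> 'a measure) \<Rightarrow> (real \<Rightarrow> 'a \<Rightarrow> real) \<Rightarrow> bool" where
  "martingale M T F X \<longleftrightarrow> adapted T F X \<and> (\<forall>t\<in>{0..T}. integrable M (X t)) \<and>
     (\<forall>s\<in>{0..T}. \<forall>t\<in>{0..T}. s \<le> t \<longrightarrow>
        (AE \<omega> in M. real_cond_exp M (F s) (X t) \<omega> = X s \<omega>))"

definition stopping_time :: "'a measure \<Rightarrow> real \<Rightarrow> (real \<Rightarrow> 'a measure) \<Rightarrow> ('a \<Rightarrow> real) \<Rightarrow> bool" where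
  "stopping_time M T F \<tau> \<longleftrightarrow> (\<forall>\<omega>\<in>space M. \<tau> \<omega> \<in> {0..T}) \<and>
     (\<forall>t\<in>{0..T}. {\<omega>\<in>space M. \<tau> \<omega> \<le> t} \<in> sets (F t))"

definition local_martingale :: "'a measure \<Rightarrow> real \<Rightarrow> (real \<Rightarrow> 'a measure) \<Rightarrow> (real \<Rightarrow> 'a \<Rightarrow> real) \<Rightarrow> bool" where
  "local_martingale M T F X \<longleftrightarrow> adapted T F X \<and>
     (\<exists>\<tau> :: nat \<Rightarrow> 'a \<Rightarrow> real.
        (\<forall>n. stopping_time M T F (\<tau> n)) \<and>
        (\<forall>n. \<forall>\<omega>\<in>space M. \<tau> n \<omega> \<le> \<tau> (Suc n) \<omega>) \<and>
        (AE \<omega> in M. \<exists>n. \<tau> n \<omega> = T) \<and>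
        (\<forall>n. martingale M T F (\<lambda>t \<omega>. X (min t (\<tau> n \<omega>)) \<omega>)))"

definition consistent_price_system ::
  "'a measure \<Rightarrow> real \<Rightarrow> (real \<Rightarrow> 'a measure) \<Rightarrow> real \<Rightarrow> (real \<Rightarrow> 'a \<Rightarrow> real)
     \<Rightarrow> (real \<Rightarrow> 'a \<Rightarrow> real) \<Rightarrow> (real \<Rightarrow> 'a \<Rightarrow> real) \<Rightarrow> bool" where
  "consistent_price_system M T F lam S Z0 Z1 \<longleftrightarrow>
     (\<forall>t\<in>{0..T}. \<forall>\<omega>\<in>space M. Z0 t \<omega> > 0 \<and> Z1 t \<omega> > 0) \<and>
     (\<forall>\<omega>\<in>space M. Z0 0 \<omega> = 1) \<and>
     martingale M T F Z0 \<and> local_martingale M T F Z1 \<and>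
     (\<forall>t\<in>{0..T}. AE \<omega> in M. Z1 t \<omega> / Z0 t \<omega> \<in> {(1 - lam) * S t \<omega> .. S t \<omega>})"

definition upper_semicontinuous_on :: "real set \<Rightarrow> (real \<Rightarrow> real) \<Rightarrow> bool" where
  "upper_semicontinuous_on A f \<longleftrightarrow>
     (\<forall>x\<in>A. \<forall>c. f x < c \<longrightarrow> eventually (\<lambda>y. f y < c) (at x within A))"

definition utility :: "(real \<Rightarrow> real) \<Rightarrow> bool" where
  "utility U \<longleftrightarrow>
     (\<exists>x\<in>{0<..}. \<exists>y\<in>{0<..}. U x \<noteq> U y) \<and>
     mono_on {0<..} U \<and>
     upper_semicontinuous_on {0<..} U \<and>
     (\<exists>L::ereal. ((\<lambda>x. ereal (U x)) \<longlongrightarrow> L) at_top \<and> L > 0) \<and>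
     ((\<lambda>x. U x / x) \<longlongrightarrow> 0) at_top"

definition U_ext :: "(real \<Rightarrow> real) \<Rightarrow> real \<Rightarrow> ereal" where
  "U_ext U x = (if x > 0 then ereal (U x)
                else if x = 0 then Lim (at_right 0) (\<lambda>z. ereal (U z))
                else -\<infinity>)"

definition ereal_expectation :: "'a measure \<Rightarrow> ('a \<Rightarrow> ereal) \<Rightarrow> ereal" where
  "ereal_expectation M g =
     (if (\<integral>\<^sup>+ \<omega>. e2ennreal (max 0 (- g \<omega>)) \<partial>M) = \<infinity> then -\<infinity>
      else enn2ereal (\<integral>\<^sup>+ \<omega>. e2ennreal (max 0 (g \<omega>)) \<partial>M)
         - enn2ereal (\<integral>\<^sup>+ \<omega>. e2ennreal (max 0 (- g \<omega>)) \<partial>M))"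

definition concave_ereal_on :: "real set \<Rightarrow> (real \<Rightarrow> ereal) \<Rightarrow> bool" where
  "concave_ereal_on A h \<longleftrightarrow> convex {(x, r::real). x \<in> A \<and> ereal r \<le> h x}"

definition concave_envelope_on :: "real set \<Rightarrow> (real \<Rightarrow> ereal) \<Rightarrow> real \<Rightarrow> ereal" where
  "concave_envelope_on A g x =
     (INF h \<in> {h. concave_ereal_on A h \<and> (\<forall>z\<in>A. g z \<le> h z)}. h x)"

definition U_c :: "(real \<Rightarrow> real) \<Rightarrow> real \<Rightarrow> ereal" where
  "U_c U x = (INF h \<in> {h. concave_ereal_on UNIV h \<and> (\<forall>z. h z \<noteq> \<infinity>) \<and> (\<forall>z. U_ext U z \<le> h z)}. h x)"

definition conj_V :: "(real \<Rightarrow> real) \<Rightarrow> real \<Rightarrow> ereal" where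
  "conj_V U y = (SUP x \<in> {0<..}. ereal (U x - x * y))"

definition budget_set :: "'a measure \<Rightarrow> ('a \<Rightarrow> real) \<Rightarrow> real \<Rightarrow> ('a \<Rightarrow> real) set" where
  "budget_set M ZT x = {f. f \<in> borel_measurable M \<and> (\<forall>\<omega>\<in>space M. f \<omega> \<ge> 0) \<and>
      (\<integral>\<^sup>+ \<omega>. ennreal (ZT \<omega> * f \<omega>) \<partial>M) \<le> ennreal x}"

definition value_fun :: "'a measure \<Rightarrow> ('a \<Rightarrow> real) \<Rightarrow> (real \<Rightarrow> ereal) \<Rightarrow> real \<Rightarrow> ereal" where
  "value_fun M ZT W x = (SUP f \<in> budget_set M ZT x. ereal_expectation M (\<lambda>\<omega>. W (f \<omega>)))"

end

theory Submission
  imports Defs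
begin

text \<open>Weak duality: Fenchel's inequality \<open>U(f) \<le> V(y Z) + y Z f\<close>, integrated over \<open>f \<in> C(x)\<close>,
  gives \<open>u(x,W) \<le> v(y) + x y\<close> both for \<open>W = U\<close> and for \<open>W = U\<^sub>c\<close>, since affine functions
  above \<open>U\<close> lie above \<open>U\<^sub>c\<close>. For the reverse inequality in (1), choose measurably in \<open>\<omega>\<close> an
  \<open>e\<close>-maximiser \<open>f(\<omega>)\<close> of \<open>U(\<cdot>) - y Z(\<omega>) \<cdot>\<close> among the positive rationals; comparing with
  Fenchel's inequality at \<open>y/2\<close> and using \<open>v(y/2) < \<infinity>\<close> shows that \<open>E[Z f]\<close> is finite, so \<open>f\<close>
  is affordable at the price \<open>x = E[Z f]\<close> and \<open>u(x,U) - x y \<ge> v(y) - e\<close>.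

  For (2), \<open>u(\<cdot>,U\<^sub>c)\<close> is a concave majorant of \<open>u(\<cdot>,U)\<close>, by concavity of \<open>U\<^sub>c\<close> and convexity
  of the budget constraint. Conversely, a concave majorant \<open>h\<close> of \<open>u(\<cdot>,U)\<close> has a supporting
  line at \<open>x\<close> of some slope \<open>s \<ge> 0\<close> (\<open>h\<close> is bounded below on \<open>[x,\<infinity>)\<close> since \<open>u(\<cdot>,U)\<close> is
  increasing); by (1), \<open>v(y) \<le> h(x) - s x\<close> for \<open>y = s + e/x\<close>, and weak duality gives
  \<open>u(x,U\<^sub>c) \<le> v(y) + x y \<le> h(x) + e\<close>.\<close>

section \<open>Expectations of extended-real random variables\<close>

lemma e2ennreal_max_0_ereal [simp]: "e2ennreal (max 0 (ereal r)) = ennreal r"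
  by (cases "0 \<le> r") (auto simp: max_def ennreal_neg simp flip: enn2ereal_ennreal)

lemma enn2ereal_eq_ereal_enn2real: "A \<noteq> \<top> \<Longrightarrow> enn2ereal A = ereal (enn2real A)"
  by (metis enn2ereal_ennreal enn2real_nonneg ennreal_enn2real_if)

lemma ereal_expectation_cong:
  assumes "\<And>\<omega>. \<omega> \<in> space M \<Longrightarrow> A \<omega> = B \<omega>"
  shows "ereal_expectation M A = ereal_expectation M B"
  unfolding ereal_expectation_def using assms by (simp cong: nn_integral_cong)

lemma ereal_expectation_integrable:
  assumes "integrable M h"
  shows "ereal_expectation M (\<lambda>\<omega>. ereal (h \<omega>)) = ereal (integral\<^sup>L M h)"
proof -
  have "(\<integral>\<^sup>+ x. ennreal (h x) \<partial>M) \<noteq> \<infinity>" "(\<integral>\<^sup>+ x. ennreal (- h x) \<partial>M) \<noteq> \<infinity>"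
    using assms unfolding real_integrable_def by auto
  then show ?thesis
    unfolding ereal_expectation_def real_lebesgue_integral_def[OF assms]
    by (simp add: enn2ereal_eq_ereal_enn2real)
qed

lemma ereal_expectation_mono:
  assumes "\<And>\<omega>. \<omega> \<in> space M \<Longrightarrow> A \<omega> \<le> B \<omega>"
  shows "ereal_expectation M A \<le> ereal_expectation M B"
proof -
  let ?pA = "\<integral>\<^sup>+ \<omega>. e2ennreal (max 0 (A \<omega>)) \<partial>M"
  let ?nA = "\<integral>\<^sup>+ \<omega>. e2ennreal (max 0 (- A \<omega>)) \<partial>M"
  let ?pB = "\<integral>\<^sup>+ \<omega>. e2ennreal (max 0 (B \<omega>)) \<partial>M"
  let ?nB = "\<integral>\<^sup>+ \<omega>. e2ennreal (max 0 (- B \<omega>)) \<partial>M"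
  have p: "?pA \<le> ?pB" and n: "?nB \<le> ?nA"
    by (intro nn_integral_mono e2ennreal_mono max.mono; use assms in simp)+
  show ?thesis
  proof (cases "?nA = \<infinity>")
    case False
    then have "?nB \<noteq> \<infinity>" using n by (metis infinity_ennreal_def top.extremum_uniqueI)
    moreover have "enn2ereal ?pA - enn2ereal ?nA \<le> enn2ereal ?pB - enn2ereal ?nB"
      using p n by (intro ereal_minus_mono) (simp_all add: less_eq_ennreal.rep_eq)
    ultimately show ?thesis unfolding ereal_expectation_def using False by simp
  qed (simp add: ereal_expectation_def)
qed

lemma e2ennreal_parts_add:
  fixes a b :: ereal
  assumes "a \<noteq> -\<infinity>" "b \<noteq> -\<infinity>"
  shows "e2ennreal (max 0 (a + b)) + e2ennreal (max 0 (- a)) + e2ennreal (max 0 (- b)) =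
         e2ennreal (max 0 (- (a + b))) + e2ennreal (max 0 a) + e2ennreal (max 0 b)"
proof (cases "a = \<infinity> \<or> b = \<infinity>")
  case True
  then have "a + b = \<infinity>" using assms by auto
  then show ?thesis using True by auto
next
  case False
  then obtain x y where [simp]: "a = ereal x" "b = ereal y" using assms
    by (cases a; cases b) auto
  have "max 0 (x + y) + max 0 (- x) + max 0 (- y) = max 0 (- (x + y)) + max 0 x + max 0 y"
    by (simp add: max_def)
  then have "ennreal (max 0 (x + y) + max 0 (- x) + max 0 (- y))
      = ennreal (max 0 (- (x + y)) + max 0 x + max 0 y)"
    by (rule arg_cong)
  then show ?thesis by simp
qed

lemma e2ennreal_neg_part_add_le:
  fixes a b :: ereal
  assumes "a \<noteq> -\<infinity>" "b \<noteq> -\<infinity>"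
  shows "e2ennreal (max 0 (- (a + b))) \<le> e2ennreal (max 0 (- a)) + e2ennreal (max 0 (- b))"
proof (cases "a = \<infinity> \<or> b = \<infinity>")
  case True
  then have "a + b = \<infinity>" using assms by auto
  then show ?thesis by (simp only:) simp
next
  case False
  then obtain x y where [simp]: "a = ereal x" "b = ereal y" using assms
    by (cases a; cases b) auto
  have "ennreal (- (x + y)) \<le> ennreal (max 0 (- x) + max 0 (- y))"
    by (intro ennreal_leI) (simp add: max_def)
  then show ?thesis by simp
qed

lemma enn2ereal_diff_eq_add_diff:
  fixes pS nS pA nA pB nB :: ennreal
  assumes "pS + nA + nB = nS + pA + pB" "nA \<noteq> \<top>" "nB \<noteq> \<top>" "nS \<noteq> \<top>"
  shows "enn2ereal pS - enn2ereal nS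
       = (enn2ereal pA - enn2ereal nA) + (enn2ereal pB - enn2ereal nB)"
proof (cases "pA = \<top> \<or> pB = \<top>")
  case True
  then have "pS = \<top>" using assms by (auto simp: top_add)
  then show ?thesis using True assms by (auto simp: enn2ereal_eq_ereal_enn2real)
next
  case False
  then have pS: "pS \<noteq> \<top>" using assms by (metis ennreal_add_eq_top)
  have "enn2real (pS + nA + nB) = enn2real (nS + pA + pB)" using assms by simp
  then have "enn2real pS + enn2real nA + enn2real nB = enn2real nS + enn2real pA + enn2real pB"
    using assms(2-4) False pS
    by (simp add: enn2real_plus less_top[symmetric])
  then show ?thesis using assms False pS by (simp add: enn2ereal_eq_ereal_enn2real)
qed

lemma ereal_expectation_add:
  assumes [measurable]: "A \<in> borel_measurable M" "B \<in> borel_measurable M"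
    and EA: "ereal_expectation M A > -\<infinity>" and EB: "ereal_expectation M B > -\<infinity>"
  shows "ereal_expectation M (\<lambda>\<omega>. A \<omega> + B \<omega>) = ereal_expectation M A + ereal_expectation M B"
proof -
  define pos where "pos X = (\<integral>\<^sup>+\<omega>. e2ennreal (max 0 (X \<omega>)) \<partial>M)" for X :: "'a \<Rightarrow> ereal"
  define neg where "neg X = (\<integral>\<^sup>+\<omega>. e2ennreal (max 0 (- X \<omega>)) \<partial>M)" for X :: "'a \<Rightarrow> ereal"
  let ?S = "\<lambda>\<omega>. A \<omega> + B \<omega>"
  have E: "ereal_expectation M X = (if neg X = \<infinity> then -\<infinity> else enn2ereal (pos X) - enn2ereal (neg X))"
    for X unfolding ereal_expectation_def pos_def neg_def ..
  have fA: "neg A \<noteq> \<infinity>" and fB: "neg B \<noteq> \<infinity>" using EA EB unfolding E by (auto split: if_splits)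
  have "AE \<omega> in M. A \<omega> \<noteq> -\<infinity>"
    using nn_integral_PInf_AE[OF _ fA[unfolded neg_def]] by (rule eventually_mono) auto
  moreover have "AE \<omega> in M. B \<omega> \<noteq> -\<infinity>"
    using nn_integral_PInf_AE[OF _ fB[unfolded neg_def]] by (rule eventually_mono) auto
  ultimately have parts_eq: "AE \<omega> in M.
      e2ennreal (max 0 (?S \<omega>)) + e2ennreal (max 0 (- A \<omega>)) + e2ennreal (max 0 (- B \<omega>)) =
      e2ennreal (max 0 (- ?S \<omega>)) + e2ennreal (max 0 (A \<omega>)) + e2ennreal (max 0 (B \<omega>))"
    and neg_le: "AE \<omega> in M.
      e2ennreal (max 0 (- ?S \<omega>)) \<le> e2ennreal (max 0 (- A \<omega>)) + e2ennreal (max 0 (- B \<omega>))"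
    by (eventually_elim, simp add: e2ennreal_parts_add e2ennreal_neg_part_add_le)+
  have "pos ?S + neg A + neg B = neg ?S + pos A + pos B"
    unfolding pos_def neg_def
    by (simp add: nn_integral_add[symmetric]) (rule nn_integral_cong_AE[OF parts_eq])
  moreover have "neg ?S \<le> neg A + neg B"
    unfolding pos_def neg_def
    by (simp add: nn_integral_add[symmetric]) (rule nn_integral_mono_AE[OF neg_le])
  then have "neg ?S \<noteq> \<infinity>"
    using fA fB by (metis ennreal_add_eq_top infinity_ennreal_def top.extremum_uniqueI)
  ultimately show ?thesis
    unfolding E using fA fB by (simp add: enn2ereal_diff_eq_add_diff)
qed

lemma e2ennreal_max_0_cmult:
  fixes a :: ereal
  assumes "c > 0"
  shows "e2ennreal (max 0 (ereal c * a)) = ennreal c * e2ennreal (max 0 a)"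
  using assms by (cases a) (simp_all add: ennreal_mult' ennreal_mult_top)

lemma ereal_expectation_cmult:
  assumes [measurable]: "A \<in> borel_measurable M" and c: "c > 0"
  shows "ereal_expectation M (\<lambda>\<omega>. ereal c * A \<omega>) = ereal c * ereal_expectation M A"
proof -
  let ?P = "\<integral>\<^sup>+\<omega>. e2ennreal (max 0 (A \<omega>)) \<partial>M"
  let ?N = "\<integral>\<^sup>+\<omega>. e2ennreal (max 0 (- A \<omega>)) \<partial>M"
  have "\<And>\<omega>. - (ereal c * A \<omega>) = ereal c * (- A \<omega>)" by simp
  then have P: "(\<integral>\<^sup>+\<omega>. e2ennreal (max 0 (ereal c * A \<omega>)) \<partial>M) = ennreal c * ?P"
    and N: "(\<integral>\<^sup>+\<omega>. e2ennreal (max 0 (- (ereal c * A \<omega>))) \<partial>M) = ennreal c * ?N"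
    by (simp_all only: e2ennreal_max_0_cmult[OF c]) (simp_all add: nn_integral_cmult)
  have "enn2ereal (ennreal c * ?P) - enn2ereal (ennreal c * ?N) = ereal c * (enn2ereal ?P - enn2ereal ?N)"
    if "?N \<noteq> \<top>"
    using that c by (cases "?P = \<top>")
      (simp_all add: enn2ereal_eq_ereal_enn2real ennreal_mult_top times_ennreal.rep_eq algebra_simps)
  then show ?thesis
    unfolding ereal_expectation_def P N using c by (auto simp: ennreal_mult_eq_top_iff)
qed

section \<open>The conjugate of a utility and the concave envelope\<close>

definition conj_V_real :: "(real \<Rightarrow> real) \<Rightarrow> real \<Rightarrow> real" where
  "conj_V_real U t = real_of_ereal (conj_V U t)"

lemma utility_mono: "utility U \<Longrightarrow> 0 < x \<Longrightarrow> x \<le> y \<Longrightarrow> U x \<le> U y"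
  unfolding utility_def mono_on_def by auto

lemma utility_minus_linear_bounded:
  assumes u: "utility U" and t: "t > 0"
  shows "\<exists>B. \<forall>x>0. U x - x * t \<le> B"
proof -
  have "((\<lambda>x. U x / x) \<longlongrightarrow> 0) at_top" using u unfolding utility_def by auto
  then have "eventually (\<lambda>x. U x / x < t) at_top" using t by (rule order_tendstoD(2))
  then obtain N where N: "\<And>x. x \<ge> N \<Longrightarrow> U x / x < t" by (auto simp: eventually_at_top_linorder)
  have "U x - x * t \<le> \<bar>U (max N 1)\<bar>" if "x > 0" for x
  proof (cases "x \<ge> max N 1")
    case True
    then have "U x < t * x" using N that by (simp add: divide_less_eq)
    then show ?thesis by (simp add: algebra_simps)
  next
    case False
    then have "U x \<le> U (max N 1)" using utility_mono[OF u that] by auto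
    then show ?thesis using that t by (smt (verit) mult_pos_pos)
  qed
  then show ?thesis by blast
qed

lemma
  assumes u: "utility U" and t: "t > 0"
  shows conj_V_eq_real: "conj_V U t = ereal (conj_V_real U t)"
    and fenchel_inequality: "x > 0 \<Longrightarrow> U x - x * t \<le> conj_V_real U t"
proof -
  obtain B where B: "\<And>x. x > 0 \<Longrightarrow> U x - x * t \<le> B"
    using utility_minus_linear_bounded[OF u t] by blast
  have le: "conj_V U t \<le> ereal B" unfolding conj_V_def by (rule SUP_least) (use B in auto)
  have ge: "ereal (U x - x * t) \<le> conj_V U t" if "x > 0" for x
    unfolding conj_V_def by (rule SUP_upper) (use that in auto)
  have "\<bar>conj_V U t\<bar> \<noteq> \<infinity>" using le ge[of 1] by auto
  then show eq: "conj_V U t = ereal (conj_V_real U t)"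
    unfolding conj_V_real_def by (simp add: ereal_real')
  show "x > 0 \<Longrightarrow> U x - x * t \<le> conj_V_real U t" using ge eq by auto
qed

lemma convex_on_conj_V_real:
  assumes u: "utility U"
  shows "convex_on {0<..} (conj_V_real U)"
proof (rule convex_onI)
  fix t a b :: real assume t: "0 < t" "t < 1" and ab: "a \<in> {0<..}" "b \<in> {0<..}"
  let ?m = "(1 - t) *\<^sub>R a + t *\<^sub>R b"
  have m: "?m > 0" using t ab by (simp add: add_pos_pos)
  have "conj_V U ?m \<le> ereal ((1 - t) * conj_V_real U a + t * conj_V_real U b)"
    unfolding conj_V_def
  proof (rule SUP_least)
    fix x :: real assume x: "x \<in> {0<..}"
    have "U x - x * ?m = (1 - t) * (U x - x * a) + t * (U x - x * b)"
      by (simp add: algebra_simps)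
    also have "\<dots> \<le> (1 - t) * conj_V_real U a + t * conj_V_real U b"
      using fenchel_inequality[OF u] ab t x by (intro add_mono mult_left_mono) auto
    finally show "ereal (U x - x * ?m) \<le> ereal ((1 - t) * conj_V_real U a + t * conj_V_real U b)"
      by simp
  qed
  then show "conj_V_real U ?m \<le> (1 - t) * conj_V_real U a + t * conj_V_real U b"
    using conj_V_eq_real[OF u m] by simp
qed simp

lemma conj_V_real_rational_approx:
  assumes u: "utility U" and t: "t > 0" and e: "e > 0"
  shows "\<exists>q\<in>\<rat>. q > 0 \<and> conj_V_real U t - e < U q - q * t"
proof -
  have "ereal (conj_V_real U t - e) < conj_V U t" using conj_V_eq_real[OF u t] e by simp
  then obtain x where x: "x > 0" "conj_V_real U t - e < U x - x * t"
    unfolding conj_V_def less_SUP_iff by auto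
  define d where "d = (U x - x * t - (conj_V_real U t - e)) / t"
  have "d > 0" using x t by (simp add: d_def)
  then obtain q where q: "q \<in> \<rat>" "x < q" "q < x + d" using Rats_dense_in_real[of x "x + d"] by auto
  have "U x \<le> U q" using utility_mono[OF u x(1)] q by simp
  moreover have "q * t < (x + d) * t" using q t by simp
  moreover have "d * t = U x - x * t - (conj_V_real U t - e)" using t by (simp add: d_def)
  ultimately show ?thesis using q x by (intro bexI[OF _ q(1)]) (auto simp: distrib_right)
qed

lemma U_ext_0_eq_INF:
  assumes u: "utility U"
  shows "U_ext U 0 = (INF z\<in>{0<..}. ereal (U z))"
proof -
  let ?L = "INF z\<in>{0<..}. ereal (U z)"
  have "((\<lambda>z. ereal (U z)) \<longlongrightarrow> ?L) (at_right 0)"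
  proof (rule order_tendstoI)
    fix a assume a: "a < ?L"
    have "a < ereal (U z)" if "0 < z" for z
      using a INF_lower[of z "{0<..}" "\<lambda>z. ereal (U z)"] that by auto
    then show "eventually (\<lambda>z. a < ereal (U z)) (at_right 0)"
      using eventually_at_right_less[of "0::real"] by (auto elim: eventually_mono)
  next
    fix a assume "?L < a"
    then obtain z0 where z0: "z0 > 0" "ereal (U z0) < a" by (auto simp: INF_less_iff)
    have "ereal (U z) < a" if "0 < z" "z < z0" for z
      using utility_mono[OF u that(1), of z0] that z0(2) by (metis ereal_less_eq(3) le_less_trans less_imp_le)
    then show "eventually (\<lambda>z. ereal (U z) < a) (at_right 0)"
      unfolding eventually_at_right_field using z0(1) by blast
  qed
  then show ?thesis unfolding U_ext_def by (simp add: tendsto_Lim)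
qed

lemma U_ext_le_U:
  assumes u: "utility U" and "0 \<le> z" "z \<le> w" "0 < w"
  shows "U_ext U z \<le> ereal (U w)"
proof (cases "z = 0")
  case True
  then show ?thesis using U_ext_0_eq_INF[OF u] assms by (auto intro!: INF_lower2[of w])
qed (use assms utility_mono[OF u, of z w] in \<open>simp add: U_ext_def\<close>)

lemma U_ext_le_affine:
  assumes u: "utility U" and t: "t > 0"
  shows "U_ext U z \<le> ereal (conj_V_real U t + z * t)"
proof -
  consider "z > 0" | "z = 0" | "z < 0" by linarith
  then show ?thesis
  proof cases
    case 1
    then show ?thesis using fenchel_inequality[OF u t 1] by (simp add: U_ext_def)
  next
    case 2
    show ?thesis
    proof (rule ereal_le_epsilon2)
      fix e :: real assume e: "0 < e"
      then have w: "e / t > 0" using t by simp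
      have "U_ext U z \<le> ereal (U (e / t))" using U_ext_le_U[OF u _ _ w] 2 w by simp
      also have "\<dots> \<le> ereal (conj_V_real U t + (e / t) * t)" using fenchel_inequality[OF u t w] by simp
      finally show "U_ext U z \<le> ereal (conj_V_real U t + z * t) + ereal e" using t 2 by simp
    qed
  qed (simp add: U_ext_def)
qed

lemma concave_ereal_onD:
  assumes c: "concave_ereal_on A h"
    and ab: "a \<in> A" "b \<in> A" and fin: "h a \<noteq> \<infinity>" "h b \<noteq> \<infinity>"
    and uv: "u > 0" "v > 0" "u + v = 1"
  shows "ereal u * h a + ereal v * h b \<le> h (u * a + v * b)"
proof (cases "h a = -\<infinity> \<or> h b = -\<infinity>")
  case True
  then have "ereal u * h a + ereal v * h b = -\<infinity>"
    using uv fin by (cases "h a"; cases "h b") auto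
  then show ?thesis by (simp only:) simp
next
  case False
  then obtain ra rb where r: "h a = ereal ra" "h b = ereal rb" using fin
    by (cases "h a"; cases "h b") auto
  then have "(a, ra) \<in> {(x, r::real). x \<in> A \<and> ereal r \<le> h x}"
    "(b, rb) \<in> {(x, r::real). x \<in> A \<and> ereal r \<le> h x}"
    using ab by auto
  then have "u *\<^sub>R (a, ra) + v *\<^sub>R (b, rb) \<in> {(x, r::real). x \<in> A \<and> ereal r \<le> h x}"
    using c uv unfolding concave_ereal_on_def convex_def by (meson less_imp_le)
  then show ?thesis using r by simp
qed

lemma concave_ereal_on_affine: "concave_ereal_on UNIV (\<lambda>z. ereal (a + z * t))"
  unfolding concave_ereal_on_def
proof (rule convexI, clarsimp)
  fix x1 r1 x2 r2 u v :: real
  assume "r1 \<le> a + x1 * t" "r2 \<le> a + x2 * t" "0 \<le> u" "0 \<le> v" "u + v = 1"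
  then have "u * r1 + v * r2 \<le> u * (a + x1 * t) + v * (a + x2 * t)"
    by (intro add_mono mult_left_mono)
  also have "\<dots> = (u + v) * a + (u * x1 + v * x2) * t" by (simp add: algebra_simps)
  finally show "u * r1 + v * r2 \<le> a + (u * x1 + v * x2) * t" using \<open>u + v = 1\<close> by simp
qed

lemma U_ext_le_U_c: "U_ext U z \<le> U_c U z"
  unfolding U_c_def by (rule INF_greatest) auto

lemma U_c_le_affine:
  assumes u: "utility U" and t: "t > 0"
  shows "U_c U z \<le> ereal (conj_V_real U t + z * t)"
  unfolding U_c_def
  by (rule INF_lower2[of "\<lambda>z. ereal (conj_V_real U t + z * t)"])
    (use concave_ereal_on_affine U_ext_le_affine[OF u t] in auto)

lemma U_c_concave:
  assumes "u > 0" "v > 0" "u + v = 1"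
  shows "ereal u * U_c U a + ereal v * U_c U b \<le> U_c U (u * a + v * b)"
  unfolding U_c_def
proof (rule INF_greatest, clarify)
  fix h assume h: "concave_ereal_on UNIV h" "\<forall>z. h z \<noteq> \<infinity>" "\<forall>z. U_ext U z \<le> h z"
  let ?H = "{h. concave_ereal_on UNIV h \<and> (\<forall>z. h z \<noteq> \<infinity>) \<and> (\<forall>z. U_ext U z \<le> h z)}"
  have "ereal u * (INF h\<in>?H. h a) + ereal v * (INF h\<in>?H. h b) \<le> ereal u * h a + ereal v * h b"
    using h assms by (intro add_mono ereal_mult_left_mono INF_lower) auto
  also have "\<dots> \<le> h (u * a + v * b)"
    using h assms by (intro concave_ereal_onD) auto
  finally show "ereal u * (INF h\<in>?H. h a) + ereal v * (INF h\<in>?H. h b) \<le> h (u * a + v * b)" .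
qed

lemma U_c_finite:
  assumes u: "utility U" and z: "z > 0"
  shows "U_c U z = ereal (real_of_ereal (U_c U z))"
proof -
  have "ereal (U z) \<le> U_c U z" using U_ext_le_U_c[of U z] z by (simp add: U_ext_def)
  moreover have "U_c U z \<le> ereal (conj_V_real U 1 + z)" using U_c_le_affine[OF u, of 1] by simp
  ultimately show ?thesis by (cases "U_c U z") auto
qed

lemma continuous_on_U_c:
  assumes u: "utility U"
  shows "continuous_on {0<..} (\<lambda>z. real_of_ereal (U_c U z))"
proof -
  let ?p = "\<lambda>z. real_of_ereal (U_c U z)"
  have "convex_on {0<..} (\<lambda>z. - ?p z)"
  proof (rule convex_onI)
    fix t a b :: real assume t: "0 < t" "t < 1" and ab: "a \<in> {0<..}" "b \<in> {0<..}"
    have m: "(1 - t) * a + t * b > 0" using t ab by (simp add: add_pos_pos)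
    have "ereal (1 - t) * U_c U a + ereal t * U_c U b \<le> U_c U ((1 - t) * a + t * b)"
      using t by (intro U_c_concave) auto
    then have "(1 - t) * ?p a + t * ?p b \<le> ?p ((1 - t) * a + t * b)"
      using U_c_finite[OF u, of a] U_c_finite[OF u, of b] U_c_finite[OF u m] ab
      by (metis greaterThan_iff times_ereal.simps(1) plus_ereal.simps(1) ereal_less_eq(3))
    then show "- ?p ((1 - t) *\<^sub>R a + t *\<^sub>R b) \<le> (1 - t) * - ?p a + t * - ?p b" by simp
  qed simp
  then have "continuous_on {0<..} (\<lambda>z. - ?p z)" by (intro convex_on_continuous) auto
  from continuous_on_minus[OF this] show ?thesis by simp
qed

section \<open>Measurability and integrability\<close>

lemma measurable_continuous_on_pos_comp:
  fixes \<phi> :: "real \<Rightarrow> real"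
  assumes c: "continuous_on {0<..} \<phi>" and [measurable]: "g \<in> borel_measurable M"
    and pos: "\<And>\<omega>. \<omega> \<in> space M \<Longrightarrow> g \<omega> > 0"
  shows "(\<lambda>\<omega>. \<phi> (g \<omega>)) \<in> borel_measurable M"
proof -
  have [measurable]: "(\<lambda>z. indicator {0<..} z *\<^sub>R \<phi> z) \<in> borel_measurable borel"
    by (rule borel_measurable_continuous_on_indicator[OF _ c]) simp
  have "(\<lambda>\<omega>. indicator {0<..} (g \<omega>) *\<^sub>R \<phi> (g \<omega>)) \<in> borel_measurable M" by measurable
  then show ?thesis by (rule measurable_cong[THEN iffD1, rotated]) (simp add: pos)
qed

lemma measurable_U_c_comp:
  assumes u: "utility U" and [measurable]: "f \<in> borel_measurable M"
    and nonneg: "\<And>\<omega>. \<omega> \<in> space M \<Longrightarrow> f \<omega> \<ge> 0"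
  shows "(\<lambda>\<omega>. U_c U (f \<omega>)) \<in> borel_measurable M"
proof -
  let ?p = "\<lambda>z. real_of_ereal (U_c U z)"
  have [measurable]: "(\<lambda>z. indicator {0<..} z *\<^sub>R ?p z) \<in> borel_measurable borel"
    by (rule borel_measurable_continuous_on_indicator[OF _ continuous_on_U_c[OF u]]) simp
  have "(\<lambda>\<omega>. if 0 < f \<omega> then ereal (indicator {0<..} (f \<omega>) *\<^sub>R ?p (f \<omega>)) else U_c U 0)
      \<in> borel_measurable M"
    by measurable
  then show ?thesis
  proof (rule measurable_cong[THEN iffD1, rotated])
    fix \<omega> assume "\<omega> \<in> space M"
    with nonneg have "f \<omega> \<ge> 0" .
    then show "(if 0 < f \<omega> then ereal (indicator {0<..} (f \<omega>) *\<^sub>R ?p (f \<omega>)) else U_c U 0)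
        = U_c U (f \<omega>)"
      using U_c_finite[OF u, of "f \<omega>"] by auto
  qed
qed

lemma measurable_conj_V_real_comp:
  assumes "utility U" "g \<in> borel_measurable M" "\<And>\<omega>. \<omega> \<in> space M \<Longrightarrow> g \<omega> > 0"
  shows "(\<lambda>\<omega>. conj_V_real U (g \<omega>)) \<in> borel_measurable M"
  by (rule measurable_continuous_on_pos_comp[OF convex_on_continuous[OF _ convex_on_conj_V_real]])
    (use assms in auto)

lemma measurable_near_maximiser:
  assumes u: "utility U" and [measurable]: "\<zeta> \<in> borel_measurable M"
    and pos: "\<And>\<omega>. \<omega> \<in> space M \<Longrightarrow> \<zeta> \<omega> > 0" and e: "e > 0"
  obtains f where "f \<in> borel_measurable M" "(\<lambda>\<omega>. U (f \<omega>)) \<in> borel_measurable M"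
    "\<And>\<omega>. f \<omega> > 0"
    "\<And>\<omega>. \<omega> \<in> space M \<Longrightarrow> conj_V_real U (\<zeta> \<omega>) - e < U (f \<omega>) - f \<omega> * \<zeta> \<omega>"
proof -
  define Q where "Q = {q\<in>\<rat>. q > (0::real)}"
  have "countable Q" unfolding Q_def by (rule countable_subset[OF _ countable_rat]) auto
  moreover have Q_ne: "Q \<noteq> {}" unfolding Q_def by (auto intro!: exI[of _ 1])
  ultimately have range_r: "range (from_nat_into Q) = Q" by simp
  define r where "r = from_nat_into Q"
  have [measurable]: "(\<lambda>\<omega>. conj_V_real U (\<zeta> \<omega>)) \<in> borel_measurable M"
    by (rule measurable_conj_V_real_comp[OF u _ pos]) simp_all
  define good where "good n \<omega> \<longleftrightarrow> conj_V_real U (\<zeta> \<omega>) - e < U (r n) - r n * \<zeta> \<omega>" for n \<omega>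
  have good_measurable: "Measurable.pred M (good n)" for n
    unfolding good_def by (intro borel_measurable_pred_less) simp_all
  define N where "N \<omega> = (LEAST n. good n \<omega>)" for \<omega>
  have N_meas: "N \<in> measurable M (count_space UNIV)"
    unfolding N_def by (rule measurable_Least) (simp add: good_measurable)
  have good_N: "good (N \<omega>) \<omega>" if \<omega>: "\<omega> \<in> space M" for \<omega>
  proof -
    obtain q where "q \<in> \<rat>" "q > 0" "conj_V_real U (\<zeta> \<omega>) - e < U q - q * \<zeta> \<omega>"
      using conj_V_real_rational_approx[OF u pos[OF \<omega>] e] by blast
    moreover from this have "q \<in> range r" unfolding r_def range_r by (simp add: Q_def)
    then obtain n where "r n = q" by blast
    ultimately have "good n \<omega>" unfolding good_def by simp
    then show ?thesis unfolding N_def by (rule LeastI)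
  qed
  show ?thesis
  proof
    show "(\<lambda>\<omega>. r (N \<omega>)) \<in> borel_measurable M"
      by (rule measurable_compose[OF N_meas]) simp
    show "(\<lambda>\<omega>. U (r (N \<omega>))) \<in> borel_measurable M"
      by (rule measurable_compose[OF N_meas]) simp
    show "r (N \<omega>) > 0" for \<omega>
      using from_nat_into[OF Q_ne] unfolding r_def Q_def by auto
    show "conj_V_real U (\<zeta> \<omega>) - e < U (r (N \<omega>)) - r (N \<omega>) * \<zeta> \<omega>" if "\<omega> \<in> space M" for \<omega>
      using good_N[OF that] unfolding good_def .
  qed
qed

lemma integrable_between:
  fixes f :: "'a \<Rightarrow> real"
  assumes "integrable M l" "integrable M h" "f \<in> borel_measurable M"
    and "\<And>\<omega>. \<omega> \<in> space M \<Longrightarrow> l \<omega> \<le> f \<omega>" "\<And>\<omega>. \<omega> \<in> space M \<Longrightarrow> f \<omega> \<le> h \<omega>"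
  shows "integrable M f"
proof (rule Bochner_Integration.integrable_bound)
  show "integrable M (\<lambda>\<omega>. \<bar>l \<omega>\<bar> + \<bar>h \<omega>\<bar>)" using assms(1,2) by simp
  show "AE \<omega> in M. norm (f \<omega>) \<le> norm (\<bar>l \<omega>\<bar> + \<bar>h \<omega>\<bar>)"
    using assms(4,5) by (intro AE_I2) (smt (verit) real_norm_def)
qed (use assms(3) in simp)

lemma (in prob_space) integral_pos:
  fixes f :: "'a \<Rightarrow> real"
  assumes f: "integrable M f" and pos: "\<And>\<omega>. \<omega> \<in> space M \<Longrightarrow> f \<omega> > 0"
  shows "integral\<^sup>L M f > 0"
proof -
  have nonneg: "AE \<omega> in M. 0 \<le> f \<omega>" using pos by (simp add: less_imp_le)
  have "integral\<^sup>L M f \<noteq> 0"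
  proof
    assume "integral\<^sup>L M f = 0"
    then have "AE \<omega> in M. f \<omega> = 0" using integral_nonneg_eq_0_iff_AE[OF f nonneg] by simp
    moreover have "AE \<omega> in M. f \<omega> > 0" using pos by (rule AE_I2)
    ultimately have "AE \<omega> in M. False" by eventually_elim simp
    then show False by simp
  qed
  with integral_nonneg_AE[OF nonneg] show ?thesis by simp
qed

section \<open>Supporting lines of concave functions\<close>

lemma concave_ereal_on_slope_le:
  assumes conc: "concave_ereal_on {0<..} h"
    and z: "0 < z1" "z1 < x" "x < z2"
    and r: "ereal r1 \<le> h z1" "h x = ereal c" "ereal r2 \<le> h z2"
  shows "(r2 - c) / (z2 - x) \<le> (c - r1) / (x - z1)"
proof -
  define l where "l = (z2 - x) / (z2 - z1)"
  have d: "z2 - z1 \<noteq> 0" using z by simp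
  have l: "0 \<le> l" "0 \<le> 1 - l" using z by (auto simp: l_def field_simps)
  have x_eq: "l * z1 + (1 - l) * z2 = x"
    using d unfolding l_def by (simp add: divide_simps) (simp add: algebra_simps)
  have "l *\<^sub>R (z1, r1) + (1 - l) *\<^sub>R (z2, r2) \<in> {(x, r::real). x \<in> {0<..} \<and> ereal r \<le> h x}"
    using conc z r l unfolding concave_ereal_on_def convex_def by auto
  then have "l * r1 + (1 - l) * r2 \<le> c" using x_eq r(2) by simp
  then have "(z2 - z1) * (l * r1 + (1 - l) * r2) \<le> (z2 - z1) * c"
    using z by (intro mult_left_mono) auto
  moreover have "(z2 - z1) * (l * r1 + (1 - l) * r2) = (z2 - x) * r1 + (x - z1) * r2"
    using d unfolding l_def by (simp add: divide_simps)
  ultimately have "(x - z1) * (r2 - c) \<le> (z2 - x) * (c - r1)" by (simp add: algebra_simps)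
  then show ?thesis using z by (simp add: field_simps)
qed

lemma concave_ereal_on_hypograph_below_line:
  assumes conc: "concave_ereal_on {0<..} h" and x: "x > 0" "h x = ereal c"
    and finite_below: "\<And>z. z > 0 \<Longrightarrow> h z > -\<infinity>"
  obtains s where "\<And>z r. 0 < z \<Longrightarrow> ereal r \<le> h z \<Longrightarrow> r \<le> c + s * (z - x)"
proof -
  have below: "\<exists>r. ereal r \<le> h z" if "z > 0" for z
    using finite_below[OF that] by (cases "h z") auto
  define L where "L = {(c - r) / (x - z) | z r. 0 < z \<and> z < x \<and> ereal r \<le> h z}"
  obtain r1 where r1: "ereal r1 \<le> h (x / 2)" using below[of "x / 2"] x by auto
  then have "(c - r1) / (x - x / 2) \<in> L" unfolding L_def
    by (intro CollectI exI[of _ "x / 2"] exI[of _ r1]) (use x in auto)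
  then have L_ne: "L \<noteq> {}" by auto
  obtain r2 where r2: "ereal r2 \<le> h (x + 1)" using below[of "x + 1"] x by auto
  have "r2 - c \<le> l" if "l \<in> L" for l
    using that concave_ereal_on_slope_le[OF conc _ _ _ _ x(2) r2] unfolding L_def by fastforce
  then have bdd: "bdd_below L" by (auto simp: bdd_below_def)
  define s where "s = Inf L"
  have "r \<le> c + s * (z - x)" if z: "0 < z" "ereal r \<le> h z" for z r
  proof -
    consider "z < x" | "z = x" | "x < z" by linarith
    then show ?thesis
    proof cases
      case 1
      then have "(c - r) / (x - z) \<in> L" unfolding L_def using z by auto
      then have "s \<le> (c - r) / (x - z)" unfolding s_def using bdd by (rule cInf_lower)
      then show ?thesis using 1 by (simp add: field_simps)
    next
      case 3
      have "(r - c) / (z - x) \<le> s" unfolding s_def using L_ne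
        by (rule cInf_greatest)
          (use z 3 x in \<open>auto simp: L_def intro!: concave_ereal_on_slope_le[OF conc]\<close>)
      then show ?thesis using 3 by (simp add: field_simps)
    qed (use z x in simp)
  qed
  then show ?thesis by (rule that)
qed

lemma concave_ereal_on_supporting_line:
  assumes "concave_ereal_on {0<..} h" "x > 0" "h x = ereal c" "\<And>z. z > 0 \<Longrightarrow> h z > -\<infinity>"
  obtains s where "\<And>z. z > 0 \<Longrightarrow> h z \<le> ereal (c + s * (z - x))"
proof -
  obtain s where under: "\<And>z r. 0 < z \<Longrightarrow> ereal r \<le> h z \<Longrightarrow> r \<le> c + s * (z - x)"
    using concave_ereal_on_hypograph_below_line[OF assms] by blast
  have "h z \<le> ereal (c + s * (z - x))" if z: "z > 0" for z
  proof (cases "h z")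
    case (real r)
    then show ?thesis using under[OF z, of r] by simp
  next
    case PInf
    then show ?thesis using under[OF z, of "c + s * (z - x) + 1"] by simp
  qed simp
  then show ?thesis by (rule that)
qed

section \<open>The primal and dual value functions\<close>

text \<open>\<open>Z\<close> stands for \<open>Z\<^sup>0\<^sub>T\<close>; \<open>dual_value\<close>, \<open>u_U\<close> and \<open>u_Uc\<close> are the paper's \<open>v\<close>,
  \<open>u(\<cdot>,U)\<close> and \<open>u(\<cdot>,U\<^sub>c)\<close>.\<close>

locale duality_setting = prob_space M for M :: "'a measure" +
  fixes Z :: "'a \<Rightarrow> real" and U :: "real \<Rightarrow> real"
  assumes Z_measurable [measurable]: "Z \<in> borel_measurable M"
    and Z_pos: "\<And>\<omega>. \<omega> \<in> space M \<Longrightarrow> Z \<omega> > 0"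
    and Z_integrable: "integrable M Z"
    and utility: "utility U"
    and conj_V_expectation_finite:
      "\<And>y. y > 0 \<Longrightarrow> ereal_expectation M (\<lambda>\<omega>. conj_V U (y * Z \<omega>)) < \<infinity>"
begin

definition dual_value :: "real \<Rightarrow> real" where
  "dual_value y = integral\<^sup>L M (\<lambda>\<omega>. conj_V_real U (y * Z \<omega>))"

abbreviation u_U :: "real \<Rightarrow> ereal" where
  "u_U \<equiv> value_fun M Z (U_ext U)"

abbreviation u_Uc :: "real \<Rightarrow> ereal" where
  "u_Uc \<equiv> value_fun M Z (U_c U)"

lemma measurable_conj_V_real_Z:
  "y > 0 \<Longrightarrow> (\<lambda>\<omega>. conj_V_real U (y * Z \<omega>)) \<in> borel_measurable M"
  by (rule measurable_conj_V_real_comp[OF utility]) (simp_all add: Z_pos)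

lemma
  assumes y: "y > 0"
  shows integrable_conj_V_real_Z: "integrable M (\<lambda>\<omega>. conj_V_real U (y * Z \<omega>))"
    and ereal_expectation_conj_V_Z:
      "ereal_expectation M (\<lambda>\<omega>. conj_V U (y * Z \<omega>)) = ereal (dual_value y)"
proof -
  let ?V = "\<lambda>\<omega>. conj_V_real U (y * Z \<omega>)"
  have eq: "ereal_expectation M (\<lambda>\<omega>. conj_V U (y * Z \<omega>)) = ereal_expectation M (\<lambda>\<omega>. ereal (?V \<omega>))"
    by (rule ereal_expectation_cong) (simp add: conj_V_eq_real[OF utility] Z_pos y)
  have "ennreal (- ?V \<omega>) \<le> ennreal (y * Z \<omega> - U 1)" if "\<omega> \<in> space M" for \<omega>
    using fenchel_inequality[OF utility, of "y * Z \<omega>" 1] Z_pos[OF that] y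
    by (intro ennreal_leI) simp
  then have le: "(\<integral>\<^sup>+\<omega>. ennreal (- ?V \<omega>) \<partial>M) \<le> (\<integral>\<^sup>+\<omega>. ennreal (y * Z \<omega> - U 1) \<partial>M)"
    by (rule nn_integral_mono)
  have "integrable M (\<lambda>\<omega>. y * Z \<omega> - U 1)" using Z_integrable by simp
  then have "(\<integral>\<^sup>+\<omega>. ennreal (y * Z \<omega> - U 1) \<partial>M) \<noteq> \<top>"
    unfolding real_integrable_def by simp
  from neq_top_trans[OF this le] have neg: "(\<integral>\<^sup>+\<omega>. ennreal (- ?V \<omega>) \<partial>M) \<noteq> \<infinity>"
    by simp
  moreover have "ereal_expectation M (\<lambda>\<omega>. ereal (?V \<omega>)) < \<infinity>"
    using conj_V_expectation_finite[OF y] unfolding eq .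
  ultimately have "(\<integral>\<^sup>+\<omega>. ennreal (?V \<omega>) \<partial>M) \<noteq> \<infinity>"
    unfolding ereal_expectation_def by auto
  with neg show int: "integrable M ?V"
    unfolding real_integrable_def using measurable_conj_V_real_Z[OF y] by simp
  show "ereal_expectation M (\<lambda>\<omega>. conj_V U (y * Z \<omega>)) = ereal (dual_value y)"
    unfolding eq dual_value_def by (rule ereal_expectation_integrable[OF int])
qed

lemma budget_set_integrable:
  assumes f: "f \<in> budget_set M Z x" and x: "x \<ge> 0"
  shows "integrable M (\<lambda>\<omega>. Z \<omega> * f \<omega>)" "integral\<^sup>L M (\<lambda>\<omega>. Z \<omega> * f \<omega>) \<le> x"
proof -
  have [measurable]: "f \<in> borel_measurable M" and nonneg: "\<And>\<omega>. \<omega> \<in> space M \<Longrightarrow> f \<omega> \<ge> 0"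
    and le: "(\<integral>\<^sup>+\<omega>. ennreal (Z \<omega> * f \<omega>) \<partial>M) \<le> ennreal x"
    using f unfolding budget_set_def by auto
  have Zf_nonneg: "AE \<omega> in M. 0 \<le> Z \<omega> * f \<omega>"
    using nonneg Z_pos by (intro AE_I2) (simp add: less_imp_le)
  show int: "integrable M (\<lambda>\<omega>. Z \<omega> * f \<omega>)"
    using Zf_nonneg order.strict_trans1[OF le ennreal_less_top] by (intro integrableI_nonneg) auto
  show "integral\<^sup>L M (\<lambda>\<omega>. Z \<omega> * f \<omega>) \<le> x"
    using le x nn_integral_eq_integral[OF int Zf_nonneg] by simp
qed

lemma in_budget_setI:
  assumes [measurable]: "f \<in> borel_measurable M" and nonneg: "\<And>\<omega>. \<omega> \<in> space M \<Longrightarrow> f \<omega> \<ge> 0"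
    and int: "integrable M (\<lambda>\<omega>. Z \<omega> * f \<omega>)" and le: "integral\<^sup>L M (\<lambda>\<omega>. Z \<omega> * f \<omega>) \<le> x"
  shows "f \<in> budget_set M Z x"
proof -
  have "AE \<omega> in M. 0 \<le> Z \<omega> * f \<omega>"
    using nonneg Z_pos by (intro AE_I2) (simp add: less_imp_le)
  then have "(\<integral>\<^sup>+\<omega>. ennreal (Z \<omega> * f \<omega>) \<partial>M) = ennreal (integral\<^sup>L M (\<lambda>\<omega>. Z \<omega> * f \<omega>))"
    by (rule nn_integral_eq_integral[OF int])
  also have "\<dots> \<le> ennreal x" using le by (rule ennreal_leI)
  finally show ?thesis unfolding budget_set_def using nonneg by auto
qed

lemma value_fun_le_dual_value:
  assumes W: "\<And>z t. 0 \<le> z \<Longrightarrow> 0 < t \<Longrightarrow> W z \<le> ereal (conj_V_real U t + z * t)"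
    and x: "x \<ge> 0" and y: "y > 0"
  shows "value_fun M Z W x \<le> ereal (dual_value y + x * y)"
  unfolding value_fun_def
proof (rule SUP_least)
  fix f assume f: "f \<in> budget_set M Z x"
  then have nonneg: "\<And>\<omega>. \<omega> \<in> space M \<Longrightarrow> f \<omega> \<ge> 0" unfolding budget_set_def by auto
  note int = integrable_conj_V_real_Z[OF y] budget_set_integrable[OF f x]
  have "ereal_expectation M (\<lambda>\<omega>. W (f \<omega>))
      \<le> ereal_expectation M (\<lambda>\<omega>. ereal (conj_V_real U (y * Z \<omega>) + y * (Z \<omega> * f \<omega>)))"
    using W[OF nonneg, of _ "y * Z _"] Z_pos y
    by (intro ereal_expectation_mono) (simp add: algebra_simps)
  also have "\<dots> = ereal (dual_value y + y * integral\<^sup>L M (\<lambda>\<omega>. Z \<omega> * f \<omega>))"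
    using int by (subst ereal_expectation_integrable) (auto simp: dual_value_def)
  also have "\<dots> \<le> ereal (dual_value y + x * y)" using int(3) y by (simp add: mult.commute)
  finally show "ereal_expectation M (\<lambda>\<omega>. W (f \<omega>)) \<le> ereal (dual_value y + x * y)" .
qed

lemma u_U_le_dual_value: "x \<ge> 0 \<Longrightarrow> y > 0 \<Longrightarrow> u_U x \<le> ereal (dual_value y + x * y)"
  by (rule value_fun_le_dual_value) (use U_ext_le_affine[OF utility] in auto)

lemma u_Uc_le_dual_value: "x \<ge> 0 \<Longrightarrow> y > 0 \<Longrightarrow> u_Uc x \<le> ereal (dual_value y + x * y)"
  by (rule value_fun_le_dual_value) (use U_c_le_affine[OF utility] in auto)

lemma u_U_mono: "0 \<le> x \<Longrightarrow> x \<le> x' \<Longrightarrow> u_U x \<le> u_U x'"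
  unfolding value_fun_def
  by (rule SUP_subset_mono) (auto simp: budget_set_def intro: order_trans ennreal_leI)

lemma U_le_u_U: "x > 0 \<Longrightarrow> ereal (U (x / integral\<^sup>L M Z)) \<le> u_U x"
proof -
  assume x: "x > 0"
  define k where "k = x / integral\<^sup>L M Z"
  have EZ: "integral\<^sup>L M Z > 0" by (rule integral_pos[OF Z_integrable Z_pos])
  with x have k: "k > 0" by (simp add: k_def)
  have "(\<lambda>\<omega>. k) \<in> budget_set M Z x"
    using k EZ Z_integrable by (intro in_budget_setI) (auto simp: k_def)
  then have "ereal_expectation M (\<lambda>\<omega>. U_ext U k) \<le> u_U x"
    unfolding value_fun_def by (rule SUP_upper)
  moreover have "ereal_expectation M (\<lambda>\<omega>. U_ext U k) = ereal (U k)"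
    using ereal_expectation_integrable[of M "\<lambda>\<omega>. U k"] k by (simp add: U_ext_def prob_space)
  ultimately show ?thesis by (simp add: k_def)
qed

end

context duality_setting
begin

lemma integrable_near_maximiser:
  assumes y: "y > 0" and [measurable]: "f \<in> borel_measurable M" "(\<lambda>\<omega>. U (f \<omega>)) \<in> borel_measurable M"
    and f_pos: "\<And>\<omega>. f \<omega> > 0"
    and near: "\<And>\<omega>. \<omega> \<in> space M \<Longrightarrow>
      conj_V_real U (y * Z \<omega>) - e + y * (Z \<omega> * f \<omega>) \<le> U (f \<omega>)"
  shows "integrable M (\<lambda>\<omega>. Z \<omega> * f \<omega>)" "integrable M (\<lambda>\<omega>. U (f \<omega>))"
proof -
  have fenchel: "U (f \<omega>) \<le> conj_V_real U (y / 2 * Z \<omega>) + y / 2 * (Z \<omega> * f \<omega>)"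
    if "\<omega> \<in> space M" for \<omega>
    using fenchel_inequality[OF utility, of "y / 2 * Z \<omega>" "f \<omega>"] y Z_pos[OF that] f_pos
    by (simp add: algebra_simps)
  note int_V = integrable_conj_V_real_Z[OF y] integrable_conj_V_real_Z[of "y / 2"]
  show int_Zf: "integrable M (\<lambda>\<omega>. Z \<omega> * f \<omega>)"
  proof (rule integrable_between)
    show "integrable M (\<lambda>\<omega>. 0)" by simp
    show "integrable M (\<lambda>\<omega>. 2 / y * (conj_V_real U (y / 2 * Z \<omega>) - conj_V_real U (y * Z \<omega>) + e))"
      using int_V y by simp
    show "Z \<omega> * f \<omega> \<le> 2 / y * (conj_V_real U (y / 2 * Z \<omega>) - conj_V_real U (y * Z \<omega>) + e)"
      if "\<omega> \<in> space M" for \<omega>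
      using near[OF that] fenchel[OF that] y by (simp add: field_simps)
    show "0 \<le> Z \<omega> * f \<omega>" if "\<omega> \<in> space M" for \<omega>
      using Z_pos[OF that] f_pos[of \<omega>] by simp
  qed measurable
  show "integrable M (\<lambda>\<omega>. U (f \<omega>))"
  proof (rule integrable_between)
    show "integrable M (\<lambda>\<omega>. conj_V_real U (y * Z \<omega>) - e + y * (Z \<omega> * f \<omega>))"
      using int_V int_Zf by simp
    show "integrable M (\<lambda>\<omega>. conj_V_real U (y / 2 * Z \<omega>) + y / 2 * (Z \<omega> * f \<omega>))"
      using int_V int_Zf y by simp
  qed (use near fenchel in simp_all)
qed

lemma dual_value_approx:
  assumes y: "y > 0" and e: "e > 0"
  shows "\<exists>x>0. ereal (dual_value y - e) \<le> u_U x - ereal (x * y)"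
proof -
  obtain f where f_meas [measurable]: "f \<in> borel_measurable M" "(\<lambda>\<omega>. U (f \<omega>)) \<in> borel_measurable M"
    and f_pos: "\<And>\<omega>. f \<omega> > 0"
    and near: "\<And>\<omega>. \<omega> \<in> space M \<Longrightarrow>
      conj_V_real U (y * Z \<omega>) - e < U (f \<omega>) - f \<omega> * (y * Z \<omega>)"
    using measurable_near_maximiser[OF utility, of "\<lambda>\<omega>. y * Z \<omega>" M] y Z_pos e by auto
  have near_le: "conj_V_real U (y * Z \<omega>) - e + y * (Z \<omega> * f \<omega>) \<le> U (f \<omega>)"
    if "\<omega> \<in> space M" for \<omega>
    using near[OF that] by (simp add: algebra_simps)
  note int = integrable_conj_V_real_Z[OF y] integrable_near_maximiser[OF y f_meas f_pos near_le]
  define x where "x = integral\<^sup>L M (\<lambda>\<omega>. Z \<omega> * f \<omega>)"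
  have x: "x > 0" unfolding x_def using Z_pos f_pos by (intro integral_pos[OF int(2)] mult_pos_pos)
  have "f \<in> budget_set M Z x"
    using f_pos int by (intro in_budget_setI) (auto simp: x_def less_imp_le)
  then have "ereal_expectation M (\<lambda>\<omega>. U_ext U (f \<omega>)) \<le> u_U x"
    unfolding value_fun_def by (rule SUP_upper)
  moreover have "ereal_expectation M (\<lambda>\<omega>. U_ext U (f \<omega>)) = ereal (integral\<^sup>L M (\<lambda>\<omega>. U (f \<omega>)))"
    using ereal_expectation_integrable[OF int(3)] f_pos
    by (simp add: U_ext_def cong: ereal_expectation_cong)
  moreover have "dual_value y - e + x * y \<le> integral\<^sup>L M (\<lambda>\<omega>. U (f \<omega>))"
  proof -
    have "dual_value y - e + x * y = integral\<^sup>L M (\<lambda>\<omega>. conj_V_real U (y * Z \<omega>) - e + y * (Z \<omega> * f \<omega>))"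
      using int by (simp add: dual_value_def x_def prob_space)
    also have "\<dots> \<le> integral\<^sup>L M (\<lambda>\<omega>. U (f \<omega>))"
      using int near_le by (intro integral_mono) simp_all
    finally show ?thesis .
  qed
  ultimately have "ereal (dual_value y - e + x * y) \<le> u_U x"
    by (metis ereal_less_eq(3) order_trans)
  then have "ereal (dual_value y - e) \<le> u_U x - ereal (x * y)" by (cases "u_U x") auto
  with x show ?thesis by blast
qed

lemma dual_value_eq_SUP:
  assumes y: "y > 0"
  shows "ereal (dual_value y) = (SUP x\<in>{0<..}. u_U x - ereal (x * y))"
proof (rule antisym)
  show "(SUP x\<in>{0<..}. u_U x - ereal (x * y)) \<le> ereal (dual_value y)"
  proof (rule SUP_least)
    fix x :: real assume "x \<in> {0<..}"
    then have "u_U x \<le> ereal (dual_value y + x * y)" using y by (intro u_U_le_dual_value) auto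
    then show "u_U x - ereal (x * y) \<le> ereal (dual_value y)" by (cases "u_U x") auto
  qed
  show "ereal (dual_value y) \<le> (SUP x\<in>{0<..}. u_U x - ereal (x * y))"
  proof (rule ereal_le_epsilon2)
    fix e :: real assume "0 < e"
    then obtain x where "x > 0" "ereal (dual_value y - e) \<le> u_U x - ereal (x * y)"
      using dual_value_approx[OF y] by blast
    then have "ereal (dual_value y - e) \<le> (SUP x\<in>{0<..}. u_U x - ereal (x * y))"
      by (intro SUP_upper2[of x]) auto
    then have "ereal (dual_value y - e) + ereal e \<le> (SUP x\<in>{0<..}. u_U x - ereal (x * y)) + ereal e"
      by (rule add_right_mono)
    then show "ereal (dual_value y) \<le> (SUP x\<in>{0<..}. u_U x - ereal (x * y)) + ereal e"
      by simp
  qed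
qed

end

context duality_setting
begin

lemma budget_set_convex_comb:
  assumes f1: "f1 \<in> budget_set M Z x1" and f2: "f2 \<in> budget_set M Z x2"
    and x: "x1 \<ge> 0" "x2 \<ge> 0" and uv: "u \<ge> 0" "v \<ge> 0"
  shows "(\<lambda>\<omega>. u * f1 \<omega> + v * f2 \<omega>) \<in> budget_set M Z (u * x1 + v * x2)"
proof (rule in_budget_setI)
  have [measurable]: "f1 \<in> borel_measurable M" "f2 \<in> borel_measurable M"
    and nonneg: "\<And>\<omega>. \<omega> \<in> space M \<Longrightarrow> f1 \<omega> \<ge> 0 \<and> f2 \<omega> \<ge> 0"
    using f1 f2 unfolding budget_set_def by auto
  show "(\<lambda>\<omega>. u * f1 \<omega> + v * f2 \<omega>) \<in> borel_measurable M" by measurable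
  show "u * f1 \<omega> + v * f2 \<omega> \<ge> 0" if "\<omega> \<in> space M" for \<omega>
    using nonneg[OF that] uv by simp
  note i1 = budget_set_integrable[OF f1 x(1)] and i2 = budget_set_integrable[OF f2 x(2)]
  have eq: "(\<lambda>\<omega>. Z \<omega> * (u * f1 \<omega> + v * f2 \<omega>)) = (\<lambda>\<omega>. u * (Z \<omega> * f1 \<omega>) + v * (Z \<omega> * f2 \<omega>))"
    by (simp add: algebra_simps)
  show "integrable M (\<lambda>\<omega>. Z \<omega> * (u * f1 \<omega> + v * f2 \<omega>))"
    unfolding eq using i1 i2 by simp
  have "integral\<^sup>L M (\<lambda>\<omega>. Z \<omega> * (u * f1 \<omega> + v * f2 \<omega>))
      = u * integral\<^sup>L M (\<lambda>\<omega>. Z \<omega> * f1 \<omega>) + v * integral\<^sup>L M (\<lambda>\<omega>. Z \<omega> * f2 \<omega>)"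
    unfolding eq using i1 i2 by simp
  also have "\<dots> \<le> u * x1 + v * x2"
    using i1 i2 uv by (intro add_mono mult_left_mono) auto
  finally show "integral\<^sup>L M (\<lambda>\<omega>. Z \<omega> * (u * f1 \<omega> + v * f2 \<omega>)) \<le> u * x1 + v * x2" .
qed

lemma u_Uc_convex_comb:
  assumes x: "x1 > 0" "x2 > 0" and uv: "u > 0" "v > 0" "u + v = 1"
    and r: "ereal r1 \<le> u_Uc x1" "ereal r2 \<le> u_Uc x2"
  shows "ereal (u * r1 + v * r2) \<le> u_Uc (u * x1 + v * x2)"
proof (rule ereal_le_epsilon2)
  fix e :: real assume e: "0 < e"
  have "ereal (r1 - e) < u_Uc x1" "ereal (r2 - e) < u_Uc x2"
    using less_le_trans[OF _ r(1), of "ereal (r1 - e)"] less_le_trans[OF _ r(2), of "ereal (r2 - e)"] e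
    by auto
  then obtain f1 f2
    where f1: "f1 \<in> budget_set M Z x1" "ereal (r1 - e) < ereal_expectation M (\<lambda>\<omega>. U_c U (f1 \<omega>))"
      and f2: "f2 \<in> budget_set M Z x2" "ereal (r2 - e) < ereal_expectation M (\<lambda>\<omega>. U_c U (f2 \<omega>))"
    unfolding value_fun_def less_SUP_iff by blast
  let ?A1 = "\<lambda>\<omega>. U_c U (f1 \<omega>)" and ?A2 = "\<lambda>\<omega>. U_c U (f2 \<omega>)"
  have [measurable]: "?A1 \<in> borel_measurable M" "?A2 \<in> borel_measurable M"
    using f1(1) f2(1) unfolding budget_set_def by (auto intro!: measurable_U_c_comp[OF utility])
  have l1: "ereal (u * (r1 - e)) \<le> ereal u * ereal_expectation M ?A1"
    using ereal_mult_left_mono[OF less_imp_le[OF f1(2)], of "ereal u"] uv by simp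
  have l2: "ereal (v * (r2 - e)) \<le> ereal v * ereal_expectation M ?A2"
    using ereal_mult_left_mono[OF less_imp_le[OF f2(2)], of "ereal v"] uv by simp
  have "ereal (u * r1 + v * r2 - e) = ereal (u * (r1 - e)) + ereal (v * (r2 - e))"
    using uv(3) by (simp add: algebra_simps flip: distrib_left)
  also have "\<dots> \<le> ereal u * ereal_expectation M ?A1 + ereal v * ereal_expectation M ?A2"
    using l1 l2 by (rule add_mono)
  also have "\<dots> = ereal_expectation M (\<lambda>\<omega>. ereal u * ?A1 \<omega> + ereal v * ?A2 \<omega>)"
    using l1 l2 uv
    by (subst ereal_expectation_add) (auto simp: ereal_expectation_cmult intro: less_le_trans)
  also have "\<dots> \<le> ereal_expectation M (\<lambda>\<omega>. U_c U (u * f1 \<omega> + v * f2 \<omega>))"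
    using uv by (intro ereal_expectation_mono U_c_concave)
  also have "\<dots> \<le> u_Uc (u * x1 + v * x2)"
    unfolding value_fun_def using x uv f1(1) f2(1)
    by (intro SUP_upper budget_set_convex_comb) auto
  finally have "ereal (u * r1 + v * r2 - e) + ereal e \<le> u_Uc (u * x1 + v * x2) + ereal e"
    by (rule add_right_mono)
  then show "ereal (u * r1 + v * r2) \<le> u_Uc (u * x1 + v * x2) + ereal e" by simp
qed

lemma concave_ereal_on_u_Uc: "concave_ereal_on {0<..} u_Uc"
  unfolding concave_ereal_on_def
proof (rule convexI, clarsimp)
  fix x1 r1 x2 r2 a b :: real
  assume h: "x1 > 0" "ereal r1 \<le> u_Uc x1" "x2 > 0" "ereal r2 \<le> u_Uc x2"
    and ab: "0 \<le> a" "0 \<le> b" "a + b = 1"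
  consider "a = 0" | "b = 0" | "a > 0" "b > 0" using ab by linarith
  then show "0 < a * x1 + b * x2 \<and> ereal (a * r1 + b * r2) \<le> u_Uc (a * x1 + b * x2)"
  proof cases
    case 3
    then show ?thesis using h ab u_Uc_convex_comb[OF h(1,3) 3 ab(3) h(2,4)]
      by (simp add: add_pos_pos)
  qed (use h ab in simp_all)
qed

lemma u_U_le_u_Uc: "u_U x \<le> u_Uc x"
  unfolding value_fun_def
  by (intro SUP_mono bexI[rotated] ereal_expectation_mono) (auto simp: U_ext_le_U_c)

lemma line_above_u_U_slope_nonneg:
  assumes x: "x > 0" and line: "\<And>z. z > 0 \<Longrightarrow> u_U z \<le> ereal (c + s * (z - x))"
  shows "s \<ge> 0"
proof (rule ccontr)
  assume "\<not> s \<ge> 0"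
  define m where "m = U (x / integral\<^sup>L M Z)"
  define z where "z = x + (\<bar>c - m\<bar> + 1) / - s"
  have z: "z \<ge> x" using \<open>\<not> s \<ge> 0\<close> by (simp add: z_def divide_nonneg_neg)
  have "ereal m \<le> u_U x" unfolding m_def by (rule U_le_u_U[OF x])
  also have "\<dots> \<le> u_U z" using x z by (intro u_U_mono) auto
  also have "\<dots> \<le> ereal (c + s * (z - x))" using x z by (intro line) simp
  finally have "m \<le> c + s * (z - x)" by simp
  moreover have "s * (z - x) = - (\<bar>c - m\<bar> + 1)" using \<open>\<not> s \<ge> 0\<close> by (simp add: z_def)
  ultimately show False by linarith
qed

lemma u_Uc_le_concave_majorant:
  assumes h: "concave_ereal_on {0<..} h" "\<And>z. z > 0 \<Longrightarrow> u_U z \<le> h z" and x: "x > 0"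
  shows "u_Uc x \<le> h x"
proof (cases "h x = \<infinity>")
  case False
  have finite_below: "h z > -\<infinity>" if "z > 0" for z
  proof -
    have "ereal (U (z / integral\<^sup>L M Z)) \<le> h z" using U_le_u_U[OF that] h(2)[OF that] by (rule order_trans)
    then show ?thesis by (rule less_le_trans[rotated]) simp
  qed
  with False x obtain c where real: "h x = ereal c" by (cases "h x") auto
  obtain s where s: "\<And>z. z > 0 \<Longrightarrow> h z \<le> ereal (c + s * (z - x))"
    using concave_ereal_on_supporting_line[OF h(1) x real finite_below] by blast
  have u_U_le_line: "u_U z \<le> ereal (c + s * (z - x))" if "z > 0" for z
    using h(2)[OF that] s[OF that] by (rule order_trans)
  have s_nonneg: "s \<ge> 0" by (rule line_above_u_U_slope_nonneg[OF x u_U_le_line])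
  show ?thesis unfolding real
  proof (rule ereal_le_epsilon2)
    fix e :: real assume e: "0 < e"
    define y where "y = s + e / x"
    have y: "y > 0" using s_nonneg x e by (simp add: y_def add_nonneg_pos)
    have "u_U z - ereal (z * y) \<le> ereal (c - s * x)" if z: "z > 0" for z
    proof -
      have "c + s * (z - x) - z * y \<le> c - s * x"
        using z x e by (simp add: y_def algebra_simps)
      with u_U_le_line[OF z] show ?thesis by (cases "u_U z") auto
    qed
    then have "ereal (dual_value y) \<le> ereal (c - s * x)"
      unfolding dual_value_eq_SUP[OF y] by (intro SUP_least) simp
    then have "dual_value y + x * y \<le> c + e" using x by (simp add: y_def algebra_simps)
    then show "u_Uc x \<le> ereal c + ereal e"
      using u_Uc_le_dual_value[of x y] x y by (simp add: order_trans)
  qed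
qed simp

lemma u_Uc_eq_concave_envelope:
  assumes x: "x > 0"
  shows "u_Uc x = concave_envelope_on {0<..} u_U x"
  unfolding concave_envelope_on_def
proof (rule antisym)
  show "u_Uc x \<le> (INF h\<in>{h. concave_ereal_on {0<..} h \<and> (\<forall>z\<in>{0<..}. u_U z \<le> h z)}. h x)"
    using x by (auto intro!: INF_greatest u_Uc_le_concave_majorant)
  show "(INF h\<in>{h. concave_ereal_on {0<..} h \<and> (\<forall>z\<in>{0<..}. u_U z \<le> h z)}. h x) \<le> u_Uc x"
    by (rule INF_lower2[of u_Uc]) (auto simp: concave_ereal_on_u_Uc u_U_le_u_Uc)
qed

end

theorem theorem4p1:
  fixes M :: "'a measure" and T :: real and F :: "real \<Rightarrow> 'a measure"
    and lam :: real and S Z0 Z1 :: "real \<Rightarrow> 'a \<Rightarrow> real" and U :: "real \<Rightarrow> real"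
  assumes "prob_space M" and "complete_measure M" and "T > 0"
    and "filtration M T F" and "usual_conditions M T F"
    and "0 < lam" and "lam < 1"
    and "adapted T F S" and "cadlag M T S" and "\<forall>t\<in>{0..T}. \<forall>\<omega>\<in>space M. S t \<omega> > 0"
    and "consistent_price_system M T F lam S Z0 Z1"
    and "utility U"
    and "\<forall>y>0. ereal_expectation M (\<lambda>\<omega>. conj_V U (y * Z0 T \<omega>)) < \<infinity>"
  shows "(\<forall>y>0. ereal_expectation M (\<lambda>\<omega>. conj_V U (y * Z0 T \<omega>))
               = (SUP x \<in> {0<..}. value_fun M (Z0 T) (U_ext U) x - ereal (x * y))) \<and>
         (\<forall>x>0. value_fun M (Z0 T) (U_c U) x
               = concave_envelope_on {0<..} (value_fun M (Z0 T) (U_ext U)) x)"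
proof -
  have T: "T \<in> {0..T}" using \<open>T > 0\<close> by simp
  note cps = \<open>consistent_price_system M T F lam S Z0 Z1\<close>[unfolded consistent_price_system_def]
  have "\<forall>t\<in>{0..T}. \<forall>\<omega>\<in>space M. Z0 t \<omega> > 0 \<and> Z1 t \<omega> > 0" using cps by (elim conjE)
  then have Z0_pos: "\<And>\<omega>. \<omega> \<in> space M \<Longrightarrow> Z0 T \<omega> > 0" using T by blast
  have "martingale M T F Z0" using cps by (elim conjE)
  then have Z0_int: "integrable M (Z0 T)" and Z0_adapted: "Z0 T \<in> borel_measurable (F T)"
    unfolding martingale_def adapted_def using T by blast+
  have "subalgebra M (F T)" using \<open>filtration M T F\<close> T unfolding filtration_def by blast
  interpret duality_setting M "Z0 T" U
  proof (intro duality_setting.intro duality_setting_axioms.intro \<open>prob_space M\<close>)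
    show "Z0 T \<in> borel_measurable M"
      by (rule measurable_from_subalg[OF \<open>subalgebra M (F T)\<close> Z0_adapted])
  qed (use assms(12,13) Z0_pos Z0_int in simp_all)
  show ?thesis
  proof (intro conjI allI impI)
    fix y :: real assume "y > 0"
    then show "ereal_expectation M (\<lambda>\<omega>. conj_V U (y * Z0 T \<omega>))
        = (SUP x \<in> {0<..}. u_U x - ereal (x * y))"
      by (simp only: ereal_expectation_conj_V_Z dual_value_eq_SUP)
  qed (rule u_Uc_eq_concave_envelope)
qed

end
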